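(* Let $k\ge 1$ and let $T_{2,k}$ be the balanced binary tree of depth $k$, i.e. the rooted tree with $2^{k}-1$ vertices in which the root and every vertex at distance at most $k-2$ from the root has exactly two children, and all leaves are at distance $k-1$ from the root. Then \[ \pi_{leaf}(T_{2,k})=\pi(T_{2,k})=\frac{2^{k}+(-1)^{k-1}}{3}, \] the $(k-1)$-th Jacobsthal number.
   Context: Let $G$ be a finite simple undirected graph. For $S\subseteq V(G)$, the propagation process starting from $S$ is as follows: set $P(0)=S$; at each step one may add to the current set $P$ a vertex $w\notin P$ provided there is a vertex $v\in P$ adjacent to $w$ such that every neighbour of $v$ other than $w$ already lies in $P$ (i.e. $w$ is the unique neighbour of $v$ outside $P$). We say $S$ propagates in $G$ if, by repeated application of this rule, the current set can eventually become all of $V(G)$. $\pi(G)$ denotes the minimum cardinality of a set $S\subseteq V(G)$ that propagates in $G$. For a tree $T$, $\pi_{leaf}(T)$ denotes the minimum cardinality of a set consisting only of leaves (vertices of degree one) of $T$ that propagates in $T$. *)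

theory Defs
  imports Complex_Main
begin

text \<open>Graphs are given by a vertex set V and an adjacency relation E
  (symmetric, irreflexive for simple graphs).\<close>

definition nbrs :: "'a set \<Rightarrow> ('a \<Rightarrow> 'a \<Rightarrow> bool) \<Rightarrow> 'a \<Rightarrow> 'a set" where
  "nbrs V E v = {u \<in> V. E v u}"

definition prop_step :: "'a set \<Rightarrow> ('a \<Rightarrow> 'a \<Rightarrow> bool) \<Rightarrow> 'a set \<Rightarrow> 'a set \<Rightarrow> bool" where
  "prop_step V E P P' \<longleftrightarrow>
     (\<exists>v w. v \<in> P \<and> w \<in> V \<and> w \<notin> P \<and> E v w \<and>
            (\<forall>u \<in> nbrs V E v. u \<noteq> w \<longrightarrow> u \<in> P) \<and> P' = insert w P)"

definition propagates :: "'a set \<Rightarrow> ('a \<Rightarrow> 'a \<Rightarrow> bool) \<Rightarrow> 'a set \<Rightarrow> bool" where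
  "propagates V E S \<longleftrightarrow> S \<subseteq> V \<and> (prop_step V E)\<^sup>*\<^sup>* S V"

definition prop_num :: "'a set \<Rightarrow> ('a \<Rightarrow> 'a \<Rightarrow> bool) \<Rightarrow> nat" where
  "prop_num V E = (LEAST n. \<exists>S. propagates V E S \<and> card S = n)"

text \<open>Leaves: vertices of degree one; by convention the only vertex of a
  one-vertex tree also counts as a leaf.\<close>
definition is_leaf :: "'a set \<Rightarrow> ('a \<Rightarrow> 'a \<Rightarrow> bool) \<Rightarrow> 'a \<Rightarrow> bool" where
  "is_leaf V E v \<longleftrightarrow> v \<in> V \<and> (card (nbrs V E v) = 1 \<or> V = {v})"

definition prop_leaf_num :: "'a set \<Rightarrow> ('a \<Rightarrow> 'a \<Rightarrow> bool) \<Rightarrow> nat" where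
  "prop_leaf_num V E =
     (LEAST n. \<exists>S. S \<subseteq> {v. is_leaf V E v} \<and> propagates V E S \<and> card S = n)"

text \<open>Balanced binary tree of depth k in heap numbering: vertices 1 .. 2^k - 1,
  the children of i are 2i and 2i+1 (root 1, leaves at depth k-1).\<close>
definition bintree_V :: "nat \<Rightarrow> nat set" where
  "bintree_V k = {1..<2^k}"

definition bintree_E :: "nat \<Rightarrow> nat \<Rightarrow> nat \<Rightarrow> bool" where
  "bintree_E k i j \<longleftrightarrow> i \<in> bintree_V k \<and> j \<in> bintree_V k \<and> (i = j div 2 \<or> j = i div 2)"

end

theory Submission
  imports Defs "HOL-Library.Discrete_Functions"
begin

text \<open>Number the vertices in heap order, so that vertex x lies at depth floor_log x.
  Upper bound: leaves are chosen recursively in each subtree, according to whether the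
  subtree has to be forced on its own, once the parent of its root is known, or once
  that parent and the root itself are known; the three sizes obey a Jacobsthal-type
  recursion, and the middle one applied to the whole tree gives the claimed value.
  Lower bound: the vertices whose distance from the leaf level is even form an independent
  set I, and every vertex of I not in the starting set is forced by a distinct vertex
  outside I, whence |I| \<le> |S| + |V - I|. Counting I gives the same value, so the optimal
  propagating set found consists of leaves.\<close>

definition forces :: "'a set \<Rightarrow> ('a \<Rightarrow> 'a \<Rightarrow> bool) \<Rightarrow> 'a set \<Rightarrow> 'a set \<Rightarrow> bool" where
  "forces V E P Q \<longleftrightarrow> (\<exists>P'. (prop_step V E)\<^sup>*\<^sup>* P P' \<and> Q \<subseteq> P')"

lemma prop_step_iff:
  "prop_step V E P P' \<longleftrightarrow>
     (\<exists>v w. v \<in> P \<and> w \<in> V \<and> w \<notin> P \<and> E v w \<and> nbrs V E v - {w} \<subseteq> P \<and> P' = insert w P)"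
  unfolding prop_step_def by blast

lemma prop_steps_subset: "(prop_step V E)\<^sup>*\<^sup>* P P' \<Longrightarrow> P \<subseteq> P'"
  by (induction rule: rtranclp_induct) (auto simp: prop_step_iff)

lemma prop_steps_subset_vertices: "(prop_step V E)\<^sup>*\<^sup>* P P' \<Longrightarrow> P \<subseteq> V \<Longrightarrow> P' \<subseteq> V"
  by (induction rule: rtranclp_induct) (auto simp: prop_step_iff)

text \<open>A step that is blocked from a larger set would only add a vertex that is already
  there, so propagation is monotone in the starting set.\<close>
lemma prop_steps_mono:
  assumes "(prop_step V E)\<^sup>*\<^sup>* P R" "P \<subseteq> Q"
  shows "\<exists>R'. (prop_step V E)\<^sup>*\<^sup>* Q R' \<and> R \<subseteq> R'"
  using assms
proof (induction rule: rtranclp_induct)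
  case base
  then show ?case by blast
next
  case (step R R2)
  then obtain R' where R': "(prop_step V E)\<^sup>*\<^sup>* Q R'" "R \<subseteq> R'" by blast
  from step.hyps(2) obtain v w where vw: "v \<in> R" "w \<in> V" "E v w" "nbrs V E v - {w} \<subseteq> R"
    "R2 = insert w R"
    unfolding prop_step_iff by blast
  show ?case
  proof (cases "w \<in> R'")
    case True
    then show ?thesis using R' vw by auto
  next
    case False
    with vw R' have "prop_step V E R' (insert w R')"
      unfolding prop_step_iff by blast
    with R' vw show ?thesis by (auto intro: rtranclp.rtrancl_into_rtrancl)
  qed
qed

lemma forces_subset: "Q \<subseteq> P \<Longrightarrow> forces V E P Q"
  unfolding forces_def by blast

lemma forces_weaken: "forces V E P Q \<Longrightarrow> Q' \<subseteq> Q \<Longrightarrow> forces V E P Q'"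
  unfolding forces_def by blast

lemma forces_Un_self: "forces V E P Q \<Longrightarrow> forces V E P (P \<union> Q)"
  unfolding forces_def using prop_steps_subset by blast

lemma forces_mono: "forces V E P Q \<Longrightarrow> P \<subseteq> P' \<Longrightarrow> forces V E P' Q"
  unfolding forces_def by (meson order_trans prop_steps_mono)

lemma forces_trans:
  assumes "forces V E P Q" "forces V E (P \<union> Q) R"
  shows "forces V E P (Q \<union> R)"
proof -
  obtain P1 where P1: "(prop_step V E)\<^sup>*\<^sup>* P P1" "Q \<subseteq> P1"
    using assms(1) unfolding forces_def by blast
  then have "forces V E P1 R"
    using assms(2) prop_steps_subset by (blast intro: forces_mono)
  then obtain P2 where P2: "(prop_step V E)\<^sup>*\<^sup>* P1 P2" "R \<subseteq> P2"
    unfolding forces_def by blast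
  with P1 prop_steps_subset[OF P2(1)] show ?thesis
    unfolding forces_def by (blast intro: rtranclp_trans)
qed

lemma forces_singleton:
  assumes "v \<in> P" "w \<in> V" "E v w" "nbrs V E v - {w} \<subseteq> P"
  shows "forces V E P {w}"
proof (cases "w \<in> P")
  case True
  then show ?thesis by (simp add: forces_subset)
next
  case False
  with assms have "prop_step V E P (insert w P)"
    unfolding prop_step_iff by blast
  then show ?thesis unfolding forces_def by blast
qed

lemma propagates_if_forces: "S \<subseteq> V \<Longrightarrow> forces V E S V \<Longrightarrow> propagates V E S"
  unfolding forces_def propagates_def
  by (metis prop_steps_subset_vertices subset_antisym)

text \<open>Each vertex of the independent set I that is added by a step is forced by a vertex
  outside I, all of whose neighbours then lie in the current set; this happens at most once
  per forcing vertex.\<close>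
lemma card_independent_prop_steps_le:
  assumes "(prop_step V E)\<^sup>*\<^sup>* S P" "S \<subseteq> V" "finite V" "\<forall>x\<in>I. \<forall>y\<in>I. \<not> E x y"
  shows "card (I \<inter> P) \<le> card S + card {v \<in> (V - I) \<inter> P. nbrs V E v \<subseteq> P}"
  using assms
proof (induction rule: rtranclp_induct)
  case base
  have "card (I \<inter> S) \<le> card S"
    using base finite_subset by (intro card_mono) auto
  then show ?case by linarith
next
  case (step P P2)
  define D where "D P = {v \<in> (V - I) \<inter> P. nbrs V E v \<subseteq> P}" for P
  from step.hyps(2) obtain v w where vw: "v \<in> P" "w \<in> V" "w \<notin> P" "E v w"
    "nbrs V E v - {w} \<subseteq> P" "P2 = insert w P"
    unfolding prop_step_iff by blast
  have PV: "P \<subseteq> V" using prop_steps_subset_vertices step.hyps(1) step.prems(1) .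
  have IH: "card (I \<inter> P) \<le> card S + card (D P)"
    using step.IH step.prems unfolding D_def by blast
  have fin: "finite (D P2)" "finite (I \<inter> P)"
    unfolding D_def using step.prems(2) PV finite_subset by auto
  have D_mono: "D P \<subseteq> D P2" unfolding D_def using vw(6) by auto
  show ?case
  proof (cases "w \<in> I")
    case True
    have "v \<in> D P2 - D P"
      using True vw PV step.prems(3) unfolding D_def nbrs_def by auto
    then have "Suc (card (D P)) \<le> card (D P2)"
      using D_mono fin(1) by (metis Diff_iff card_insert_disjoint card_mono finite_subset
          insert_subset)
    moreover have "I \<inter> P2 = insert w (I \<inter> P)" "w \<notin> I \<inter> P" using vw True by auto
    ultimately show ?thesis using IH fin(2) unfolding D_def by simp
  next
    case False
    then have "I \<inter> P2 = I \<inter> P" using vw by auto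
    moreover have "card (D P) \<le> card (D P2)" using D_mono fin(1) by (rule card_mono[rotated])
    ultimately show ?thesis using IH unfolding D_def by simp
  qed
qed

lemma card_independent_le:
  assumes "propagates V E S" "finite V" "I \<subseteq> V" "\<forall>x\<in>I. \<forall>y\<in>I. \<not> E x y"
  shows "card I \<le> card S + card (V - I)"
proof -
  have "card (I \<inter> V) \<le> card S + card {v \<in> (V - I) \<inter> V. nbrs V E v \<subseteq> V}"
    using assms card_independent_prop_steps_le unfolding propagates_def by blast
  moreover have "card {v \<in> (V - I) \<inter> V. nbrs V E v \<subseteq> V} \<le> card (V - I)"
    using assms by (intro card_mono) auto
  ultimately show ?thesis using assms(3) by (simp add: Int_absorb2)
qed

lemma mem_dyadic_interval_iff: "n \<in> {2 ^ d..<2 ^ Suc d} \<longleftrightarrow> n \<noteq> 0 \<and> floor_log n = d"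
  using floor_log_eqI[of n d] floor_log_exp2_le[of n] floor_log_exp2_gt[of n]
  by (cases "n = 0") auto

lemma floor_log_Suc_double [simp]: "n \<noteq> 0 \<Longrightarrow> floor_log (Suc (2 * n)) = Suc (floor_log n)"
  using floor_log_rec[of "Suc (2 * n)"] by simp

lemma mem_bintree_V: "x \<in> bintree_V K \<longleftrightarrow> x \<noteq> 0 \<and> floor_log x < K"
proof (cases "x = 0")
  case False
  have "x < 2 ^ K \<longleftrightarrow> floor_log x < K"
  proof
    assume "x < 2 ^ K"
    then have "(2::nat) ^ floor_log x < 2 ^ K"
      using floor_log_exp2_le[of x] False by linarith
    then show "floor_log x < K" by simp
  next
    assume "floor_log x < K"
    then have "(2::nat) ^ Suc (floor_log x) \<le> 2 ^ K"
      by (intro power_increasing) auto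
    then show "x < 2 ^ K" using floor_log_exp2_gt[of x] by simp
  qed
  then show ?thesis using False unfolding bintree_V_def by auto
qed (simp add: bintree_V_def)

lemma nbrs_bintree:
  "x \<in> bintree_V K \<Longrightarrow> nbrs (bintree_V K) (bintree_E K) x = {2 * x, 2 * x + 1, x div 2} \<inter> bintree_V K"
  unfolding nbrs_def bintree_E_def by auto

lemma is_leaf_bintree:
  assumes "x \<in> bintree_V K" "Suc (floor_log x) = K"
  shows "is_leaf (bintree_V K) (bintree_E K) x"
proof (cases "x = 1")
  case True
  with assms have "bintree_V K = {x}" by (auto simp: bintree_V_def)
  then show ?thesis using assms unfolding is_leaf_def by blast
next
  case False
  with assms have "x div 2 \<in> bintree_V K" "2 * x \<notin> bintree_V K" "2 * x + 1 \<notin> bintree_V K"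
    by (auto simp: mem_bintree_V)
  then have "nbrs (bintree_V K) (bintree_E K) x = {x div 2}"
    using nbrs_bintree[OF assms(1)] by auto
  then show ?thesis using assms unfolding is_leaf_def by simp
qed

lemma half_eq_iff: "(y::nat) div 2 = i \<longleftrightarrow> y = 2 * i \<or> y = 2 * i + 1"
  by presburger

fun subtree :: "nat \<Rightarrow> nat \<Rightarrow> nat set" where
  "subtree i 0 = {i}"
| "subtree i (Suc h) = insert i (subtree (2 * i) h \<union> subtree (2 * i + 1) h)"

lemma mem_subtree: "x \<in> subtree i h \<longleftrightarrow> (\<exists>d\<le>h. x div 2 ^ d = i)"
proof (induction h arbitrary: i)
  case 0
  then show ?case by simp
next
  case (Suc h)
  have "(\<exists>d\<le>Suc h. x div 2 ^ d = i) \<longleftrightarrow> x = i \<or> (\<exists>d\<le>h. x div 2 ^ Suc d = i)"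
    by (metis div_by_1 power_0 le0 not_less_eq_eq old.nat.exhaust)
  also have "\<dots> \<longleftrightarrow> x = i \<or> (\<exists>d\<le>h. x div 2 ^ d = 2 * i \<or> x div 2 ^ d = 2 * i + 1)"
    by (simp add: power_Suc2 div_mult2_eq half_eq_iff del: power_Suc)
  finally show ?case using Suc.IH by auto
qed

lemma subtree_root: "i \<in> subtree i h"
  by (cases h) auto

lemma bintree_V_subset_subtree: "bintree_V K \<subseteq> subtree 1 (K - 1)"
proof
  fix x assume "x \<in> bintree_V K"
  then have x: "0 < x" "floor_log x \<le> K - 1" by (auto simp: mem_bintree_V)
  have "x div 2 ^ floor_log x = 1"
    using floor_log_exp2_le[OF x(1)] floor_log_exp2_gt[of x] by (intro div_nat_eqI) simp_all
  with x(2) show "x \<in> subtree 1 (K - 1)" unfolding mem_subtree by blast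
qed

lemma children_in_subtree:
  assumes "i \<noteq> 0" "Suc (floor_log i + h) = K"
  shows "{2 * i, 2 * i + 1} \<inter> bintree_V K \<subseteq> subtree i h"
proof (cases h)
  case 0
  then show ?thesis using assms by (auto simp: mem_bintree_V)
next
  case (Suc h')
  then show ?thesis using subtree_root by auto
qed

abbreviation tree_forces :: "nat \<Rightarrow> nat set \<Rightarrow> nat set \<Rightarrow> bool" where
  "tree_forces K \<equiv> forces (bintree_V K) (bintree_E K)"

lemma tree_forces_parent_by_left_child:
  assumes "i \<noteq> 0" "Suc (floor_log i + Suc h) = K" "subtree (2 * i) h \<subseteq> Q"
  shows "tree_forces K Q {i}"
proof (rule forces_singleton)
  have V: "i \<in> bintree_V K" "2 * i \<in> bintree_V K" using assms by (auto simp: mem_bintree_V)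
  then show "bintree_E K (2 * i) i" unfolding bintree_E_def by simp
  have "nbrs (bintree_V K) (bintree_E K) (2 * i) - {i} \<subseteq> {4 * i, 2 * (2 * i) + 1} \<inter> bintree_V K"
    using nbrs_bintree[OF V(2)] by auto
  also have "\<dots> \<subseteq> subtree (2 * i) h" using children_in_subtree[of "2 * i" h K] assms by simp
  finally show "nbrs (bintree_V K) (bintree_E K) (2 * i) - {i} \<subseteq> Q" using assms(3) by blast
  show "2 * i \<in> Q" "i \<in> bintree_V K" using V assms(3) subtree_root by auto
qed

lemma tree_forces_right_child:
  assumes "i \<in> bintree_V K" "2 * i + 1 \<in> bintree_V K" "{i, 2 * i} \<subseteq> Q" "i = 1 \<or> i div 2 \<in> Q"
  shows "tree_forces K Q {2 * i + 1}"
proof (rule forces_singleton)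
  show "bintree_E K i (2 * i + 1)" using assms(1,2) unfolding bintree_E_def by simp
  have "nbrs (bintree_V K) (bintree_E K) i - {2 * i + 1} \<subseteq> {2 * i} \<union> ({i div 2} \<inter> bintree_V K)"
    using nbrs_bintree[OF assms(1)] by blast
  also have "\<dots> \<subseteq> Q"
    using assms(3,4) by (auto simp: bintree_V_def)
  finally show "nbrs (bintree_V K) (bintree_E K) i - {2 * i + 1} \<subseteq> Q" .
  show "i \<in> Q" using assms(3) by blast
qed (fact assms(2))

text \<open>Leaf seeds for subtree i h: the first forces the subtree on its own, the second once
  the parent of i is known, the third once both the parent of i and i itself are known.\<close>
fun seed_free and seed_par and seed_par_root :: "nat \<Rightarrow> nat \<Rightarrow> nat set" where
  "seed_free i 0 = {i}"
| "seed_free i (Suc h) = seed_free (2 * i) h \<union> seed_par (2 * i + 1) h"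
| "seed_par i 0 = {i}"
| "seed_par i (Suc h) = seed_free (2 * i) h \<union> seed_par_root (2 * i + 1) h"
| "seed_par_root i 0 = {}"
| "seed_par_root i (Suc h) = seed_par (2 * i) h \<union> seed_par_root (2 * i + 1) h"

lemma seeds_force_subtree:
  assumes "i \<noteq> 0" "Suc (floor_log i + h) = K"
  shows "seed_free i h \<subseteq> P \<Longrightarrow> tree_forces K P (subtree i h)"
    and "seed_par i h \<subseteq> P \<Longrightarrow> i = 1 \<or> i div 2 \<in> P \<Longrightarrow> tree_forces K P (subtree i h)"
    and "seed_par_root i h \<subseteq> P \<Longrightarrow> i \<in> P \<Longrightarrow> i = 1 \<or> i div 2 \<in> P \<Longrightarrow>
      tree_forces K P (subtree i h)"
  using assms
proof (induction h arbitrary: i P)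
  case 0
  {
    case 1
    then show ?case by (simp add: forces_subset)
  next
    case 2
    then show ?case by (simp add: forces_subset)
  next
    case 3
    then show ?case by (simp add: forces_subset)
  }
next
  case (Suc h)
  {
    case 1
    have left: "tree_forces K P (subtree (2 * i) h)"
      using 1 by (intro Suc.IH(1)) auto
    have root: "tree_forces K (P \<union> subtree (2 * i) h) {i}"
      using 1 by (intro tree_forces_parent_by_left_child) auto
    have right: "tree_forces K (P \<union> (subtree (2 * i) h \<union> {i})) (subtree (2 * i + 1) h)"
      using 1 by (intro Suc.IH(2)) auto
    from forces_trans[OF forces_trans[OF left root] right] show ?case
      by (rule forces_weaken) auto
  next
    case 2
    have V: "i \<in> bintree_V K" "2 * i + 1 \<in> bintree_V K"
      using 2 by (auto simp: mem_bintree_V)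
    have left: "tree_forces K P (subtree (2 * i) h)"
      using 2 by (intro Suc.IH(1)) auto
    have root: "tree_forces K (P \<union> subtree (2 * i) h) {i}"
      using 2 by (intro tree_forces_parent_by_left_child) auto
    have right_child: "tree_forces K (P \<union> (subtree (2 * i) h \<union> {i})) {2 * i + 1}"
      using 2 V subtree_root by (intro tree_forces_right_child) auto
    have right: "tree_forces K (P \<union> (subtree (2 * i) h \<union> {i} \<union> {2 * i + 1}))
        (subtree (2 * i + 1) h)"
      using 2 by (intro Suc.IH(3)) auto
    from forces_trans[OF forces_trans[OF forces_trans[OF left root] right_child] right] show ?case
      by (rule forces_weaken) auto
  next
    case 3
    have V: "i \<in> bintree_V K" "2 * i + 1 \<in> bintree_V K"
      using 3 by (auto simp: mem_bintree_V)
    have left: "tree_forces K P (subtree (2 * i) h)"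
      using 3 by (intro Suc.IH(2)) auto
    have right_child: "tree_forces K (P \<union> subtree (2 * i) h) {2 * i + 1}"
      using 3 V subtree_root by (intro tree_forces_right_child) auto
    have right: "tree_forces K (P \<union> (subtree (2 * i) h \<union> {2 * i + 1})) (subtree (2 * i + 1) h)"
      using 3 by (intro Suc.IH(3)) auto
    from forces_Un_self[OF forces_trans[OF forces_trans[OF left right_child] right]] show ?case
      by (rule forces_weaken) (use 3 in auto)
  }
qed

lemma seeds_at_leaf_level:
  "i \<noteq> 0 \<Longrightarrow> x \<in> seed_free i h \<union> seed_par i h \<union> seed_par_root i h \<Longrightarrow>
    x \<noteq> 0 \<and> floor_log x = floor_log i + h"
proof (induction h arbitrary: i)
  case 0
  then show ?case by auto
next
  case (Suc h)
  then have "x \<in> seed_free (2 * i) h \<union> seed_par (2 * i) h \<union> seed_par_root (2 * i) h \<or>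
    x \<in> seed_free (2 * i + 1) h \<union> seed_par (2 * i + 1) h \<union> seed_par_root (2 * i + 1) h"
    by auto
  with Suc show ?case by (metis add_Suc add_Suc_right floor_log_Suc_double floor_log_twice
        mult_is_0 zero_neq_numeral Suc_eq_plus1 nat.distinct(1))
qed

lemma card_seeds:
  "3 * int (card (seed_free i h)) \<le> 2 ^ Suc h + (if even h then 1 else 2)"
  "3 * int (card (seed_par i h)) \<le> 2 ^ Suc h + (if even h then 1 else -1)"
  "3 * int (card (seed_par_root i h)) \<le> 2 ^ Suc h + (if even h then -2 else -1)"
proof (induction h arbitrary: i)
  case 0
  {
    case 1
    then show ?case by simp
  next
    case 2
    then show ?case by simp
  next
    case 3
    then show ?case by simp
  }
next
  case (Suc h)
  {
    case 1
    have "card (seed_free i (Suc h)) \<le> card (seed_free (2 * i) h) + card (seed_par (2 * i + 1) h)"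
      by (simp add: card_Un_le)
    with Suc.IH(1)[of "2 * i"] Suc.IH(2)[of "2 * i + 1"] show ?case by (cases "even h") auto
  next
    case 2
    have "card (seed_par i (Suc h)) \<le> card (seed_free (2 * i) h) + card (seed_par_root (2 * i + 1) h)"
      by (simp add: card_Un_le)
    with Suc.IH(1)[of "2 * i"] Suc.IH(3)[of "2 * i + 1"] show ?case by (cases "even h") auto
  next
    case 3
    have "card (seed_par_root i (Suc h)) \<le> card (seed_par (2 * i) h) + card (seed_par_root (2 * i + 1) h)"
      by (simp add: card_Un_le)
    with Suc.IH(2)[of "2 * i"] Suc.IH(3)[of "2 * i + 1"] show ?case by (cases "even h") auto
  }
qed

definition alternate_levels :: "nat \<Rightarrow> nat set" where
  "alternate_levels K = {x \<in> bintree_V K. odd (K - floor_log x)}"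

lemma alternate_levels_independent:
  assumes "x \<in> alternate_levels K" "y \<in> alternate_levels K"
  shows "\<not> bintree_E K x y"
proof
  have *: False if "x \<in> alternate_levels K" "y \<in> alternate_levels K" "x = y div 2" for x y
  proof -
    from that have "y \<noteq> 0" "y \<noteq> 1" "floor_log y < K" "odd (K - floor_log y)" "odd (K - floor_log x)"
      unfolding alternate_levels_def mem_bintree_V by auto
    moreover from \<open>x = y div 2\<close> have "floor_log x = floor_log y - 1" by simp
    moreover have "floor_log y \<noteq> 0" using \<open>y \<noteq> 0\<close> \<open>y \<noteq> 1\<close> floor_log_rec[of y] by auto
    ultimately show False by (simp add: Suc_diff_Suc)
  qed
  assume "bintree_E K x y"
  then show False using * assms unfolding bintree_E_def by blast
qed

lemma alternate_levels_add_two: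
  "alternate_levels (K + 2) = {2 ^ Suc K..<2 ^ Suc (Suc K)} \<union> alternate_levels K"
proof (rule set_eqI)
  fix x
  have "odd (K + 2 - d) \<longleftrightarrow> d = Suc K \<or> d < K \<and> odd (K - d)" if "d < K + 2" for d
    using that by (cases "d < K") (auto simp: less_Suc_eq)
  then show "x \<in> alternate_levels (K + 2) \<longleftrightarrow> x \<in> {2 ^ Suc K..<2 ^ Suc (Suc K)} \<union> alternate_levels K"
    unfolding Un_iff mem_dyadic_interval_iff alternate_levels_def mem_Collect_eq mem_bintree_V
    by auto
qed

lemma card_alternate_levels: "3 * int (card (alternate_levels K)) = 2 ^ Suc K - (if even K then 2 else 1)"
proof (induction K rule: nat_induct2)
  case 0
  then show ?case by (simp add: alternate_levels_def bintree_V_def)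
next
  case 1
  have "alternate_levels 1 = {1}" by (auto simp: alternate_levels_def bintree_V_def)
  then show ?case by simp
next
  case (step K)
  have "x \<notin> alternate_levels K" if "x \<in> {2 ^ Suc K..<2 ^ Suc (Suc K)}" for x
    using that unfolding mem_dyadic_interval_iff alternate_levels_def mem_bintree_V by auto
  moreover have "finite (alternate_levels K)"
    by (simp add: alternate_levels_def bintree_V_def)
  ultimately have "card (alternate_levels (K + 2)) = 2 ^ Suc K + card (alternate_levels K)"
    unfolding alternate_levels_add_two by (subst card_Un_disjoint) auto
  with step show ?case by simp
qed

lemma card_propagating_bintree_ge:
  assumes "propagates (bintree_V K) (bintree_E K) S"
  shows "2 ^ K + (if even K then -1 else 1) \<le> 3 * int (card S)"
proof -
  let ?I = "alternate_levels K"
  have I: "?I \<subseteq> bintree_V K" "finite (bintree_V K)"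
    by (auto simp: alternate_levels_def bintree_V_def)
  have "card ?I \<le> card S + card (bintree_V K - ?I)"
    using card_independent_le[OF assms I(2,1)] alternate_levels_independent by blast
  moreover have "card (bintree_V K - ?I) = card (bintree_V K) - card ?I"
    using I by (simp add: card_Diff_subset finite_subset)
  moreover have "card ?I \<le> card (bintree_V K)" using I by (intro card_mono)
  ultimately have "2 * card ?I \<le> card S + card (bintree_V K)" by linarith
  moreover have "int (card (bintree_V K)) = 2 ^ K - 1" by (simp add: bintree_V_def of_nat_diff)
  ultimately have "2 * int (card ?I) \<le> int (card S) + 2 ^ K - 1" by linarith
  with card_alternate_levels[of K] show ?thesis by (cases "even K") auto
qed

theorem lemma1:
  fixes k :: nat
  assumes "k \<ge> 1"
  shows "prop_leaf_num (bintree_V k) (bintree_E k) = prop_num (bintree_V k) (bintree_E k)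
    \<and> real (prop_num (bintree_V k) (bintree_E k)) = (2 ^ k + (-1) ^ (k - 1)) / 3"
proof -
  define S where "S = seed_par 1 (k - 1)"
  have jacobsthal: "(2 ^ k + (-1) ^ (k - 1) :: int) = 2 ^ k + (if even k then -1 else 1)"
    using assms by (cases k) auto
  have leaves: "S \<subseteq> {v. is_leaf (bintree_V k) (bintree_E k) v}"
    using seeds_at_leaf_level[of 1 _ "k - 1"] assms
    by (auto simp: S_def mem_bintree_V intro!: is_leaf_bintree)
  then have "S \<subseteq> bintree_V k" by (auto simp: is_leaf_def)
  moreover have "tree_forces k S (bintree_V k)"
    using seeds_force_subtree(2)[of 1 "k - 1" k S] bintree_V_subset_subtree assms
    by (auto simp: S_def intro: forces_weaken)
  ultimately have S: "propagates (bintree_V k) (bintree_E k) S"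
    by (rule propagates_if_forces)
  have card_S: "3 * int (card S) = 2 ^ k + (-1) ^ (k - 1)"
    using card_seeds(2)[of 1 "k - 1"] card_propagating_bintree_ge[OF S] assms jacobsthal
    by (cases "even k") (auto simp: S_def)
  have minimal: "card S \<le> card T" if "propagates (bintree_V k) (bintree_E k) T" for T
    using card_propagating_bintree_ge[OF that] card_S jacobsthal by linarith
  have "prop_num (bintree_V k) (bintree_E k) = card S"
    unfolding prop_num_def by (rule Least_equality) (use S minimal in auto)
  moreover have "prop_leaf_num (bintree_V k) (bintree_E k) = card S"
    unfolding prop_leaf_num_def by (rule Least_equality) (use S leaves minimal in auto)
  moreover have "real (card S) = (2 ^ k + (-1) ^ (k - 1)) / 3"
    using arg_cong[OF card_S, of real_of_int] by simp
  ultimately show ?thesis by simp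
qed

end
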